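(* Let $G_0$ be a finite group with an involutive automorphism $g\mapsto\tilde g$. On $\mathcal H=\mathbb C^{G_0}$ with orthonormal basis $\{|g\rangle\}_{g\in G_0}$ let $D(g)=\sum_{h}|gh\rangle\langle h|$ for $g\in G_0$, and let $D(t)=\sum_g|\tilde g\rangle\langle g|K$ be antiunitary ($K$ = complex conjugation in this basis); set $D(gt)=D(g)D(t)$. Define on $\mathcal H\otimes\mathcal H$ $$U_1=\sum_{g\in G_0}D(g)\otimes|g^{-1}\rangle\langle g^{-1}|,\quad u_2=\sum_{g\in G_0}\tfrac1{\sqrt2}\big(e^{i\pi/4}|g\rangle+e^{-i\pi/4}|\tilde g\rangle\big)\langle g|,\quad u=(u_2\otimes\mathbb{1})U_1 .$$ Then $u$ is unitary and $u\,(D(g)\otimes D(g))\,u^\dagger=\mathbb{1}\otimes D(g)$ for every $g\in G_0\rtimes\mathbb Z_2^{\mathcal T}$ (i.e. for $g\in G_0$ and for $g=g_0t$, $g_0\in G_0$). Consequently, by iterating, $D(g)^{\otimes N}$ is unitarily equivalent (by a unitary independent of $g$) to $\mathbb{1}_{|G_0|^{N-1}}\otimes D(g)$ for all $g$. *)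

theory Defs
  imports Complex_Main "HOL-Algebra.Group"
begin

text \<open>Operators on a finite-dimensional Hilbert space with orthonormal basis indexed by a
finite set I are represented by their matrices (functions 'i => 'i => complex, only the
entries on I x I matter); vectors are functions 'i => complex (only values on I matter).\<close>

definition mmult :: "'i set \<Rightarrow> ('i \<Rightarrow> 'i \<Rightarrow> complex) \<Rightarrow> ('i \<Rightarrow> 'i \<Rightarrow> complex) \<Rightarrow> 'i \<Rightarrow> 'i \<Rightarrow> complex" where
  "mmult I A B = (\<lambda>x y. \<Sum>z\<in>I. A x z * B z y)"

definition adj :: "('i \<Rightarrow> 'i \<Rightarrow> complex) \<Rightarrow> 'i \<Rightarrow> 'i \<Rightarrow> complex" where
  "adj A = (\<lambda>x y. cnj (A y x))"

definition idm :: "'i \<Rightarrow> 'i \<Rightarrow> complex" where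
  "idm = (\<lambda>x y. if x = y then 1 else 0)"

definition unitary_on :: "'i set \<Rightarrow> ('i \<Rightarrow> 'i \<Rightarrow> complex) \<Rightarrow> bool" where
  "unitary_on I U \<longleftrightarrow> (\<forall>x\<in>I. \<forall>y\<in>I. mmult I U (adj U) x y = idm x y \<and> mmult I (adj U) U x y = idm x y)"

definition lin :: "'i set \<Rightarrow> ('i \<Rightarrow> 'i \<Rightarrow> complex) \<Rightarrow> ('i \<Rightarrow> complex) \<Rightarrow> 'i \<Rightarrow> complex" where
  "lin I M v = (\<lambda>x. \<Sum>y\<in>I. M x y * v y)"

definition cvec :: "('i \<Rightarrow> complex) \<Rightarrow> 'i \<Rightarrow> complex" where
  "cvec v = (\<lambda>x. cnj (v x))"

text \<open>A (possibly anti-linear) operator M K^c is represented by the pair (M, c);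
 c = True means the operator is antilinear, M K.\<close>
definition sapp :: "'i set \<Rightarrow> ('i \<Rightarrow> 'i \<Rightarrow> complex) \<times> bool \<Rightarrow> ('i \<Rightarrow> complex) \<Rightarrow> 'i \<Rightarrow> complex" where
  "sapp I Mc v = lin I (fst Mc) (if snd Mc then cvec v else v)"

definition kron :: "('i \<Rightarrow> 'i \<Rightarrow> complex) \<Rightarrow> ('j \<Rightarrow> 'j \<Rightarrow> complex) \<Rightarrow> ('i \<times> 'j) \<Rightarrow> ('i \<times> 'j) \<Rightarrow> complex" where
  "kron A B = (\<lambda>(x1, x2) (y1, y2). A x1 y1 * B x2 y2)"

text \<open>Tensor product of two operators of the same (anti)linearity type:
 (A K^c) \<otimes> (B K^c) = (A \<otimes> B) K^c, with K conjugation in the product basis.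
 (Only used with equal flags; the flag of the first factor is taken.)\<close>
definition stensor :: "('i \<Rightarrow> 'i \<Rightarrow> complex) \<times> bool \<Rightarrow> ('j \<Rightarrow> 'j \<Rightarrow> complex) \<times> bool
    \<Rightarrow> (('i \<times> 'j) \<Rightarrow> ('i \<times> 'j) \<Rightarrow> complex) \<times> bool" where
  "stensor A B = (kron (fst A) (fst B), snd A)"

text \<open>The representation D of G_0 \<rtimes> Z_2^T on C^{G_0}: the element g0 t^b
 (b = True means g0 t) is sent to D(g0) D(t)^b, where D(g0)|h> = |g0 h> and
 D(t) = \<Sum>_g |phi g><g| K.\<close>
definition Drep :: "('a, 'b) monoid_scheme \<Rightarrow> ('a \<Rightarrow> 'a) \<Rightarrow> 'a \<times> bool \<Rightarrow> ('a \<Rightarrow> 'a \<Rightarrow> complex) \<times> bool" where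
  "Drep G phi gb = ((\<lambda>x y. if x = fst gb \<otimes>\<^bsub>G\<^esub> (if snd gb then phi y else y) then 1 else 0), snd gb)"

definition U1mat :: "('a, 'b) monoid_scheme \<Rightarrow> ('a \<times> 'a) \<Rightarrow> ('a \<times> 'a) \<Rightarrow> complex" where
  "U1mat G = (\<lambda>x y. \<Sum>g\<in>carrier G.
      kron (fst (Drep G (\<lambda>z. z) (g, False)))
           (\<lambda>a c. if a = inv\<^bsub>G\<^esub> g \<and> c = inv\<^bsub>G\<^esub> g then 1 else 0) x y)"

definition u2mat :: "('a, 'b) monoid_scheme \<Rightarrow> ('a \<Rightarrow> 'a) \<Rightarrow> 'a \<Rightarrow> 'a \<Rightarrow> complex" where
  "u2mat G phi = (\<lambda>x y. \<Sum>g\<in>carrier G.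
      (1 / complex_of_real (sqrt 2)) *
        (cis (pi / 4) * (if x = g then 1 else 0) + cis (- pi / 4) * (if x = phi g then 1 else 0))
      * (if y = g then 1 else 0))"

definition umat :: "('a, 'b) monoid_scheme \<Rightarrow> ('a \<Rightarrow> 'a) \<Rightarrow> ('a \<times> 'a) \<Rightarrow> ('a \<times> 'a) \<Rightarrow> complex" where
  "umat G phi = mmult (carrier G \<times> carrier G) (kron (u2mat G phi) idm) (U1mat G)"

text \<open>N-fold tensor powers: basis of H^{\<otimes>N} indexed by lists of length N over G_0.\<close>
definition tidx :: "('a, 'b) monoid_scheme \<Rightarrow> nat \<Rightarrow> 'a list set" where
  "tidx G N = {xs. length xs = N \<and> set xs \<subseteq> carrier G}"

definition tpow :: "('a \<Rightarrow> 'a \<Rightarrow> complex) \<times> bool \<Rightarrow> ('a list \<Rightarrow> 'a list \<Rightarrow> complex) \<times> bool" where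
  "tpow Mc = ((\<lambda>xs ys. \<Prod>i<length xs. fst Mc (xs ! i) (ys ! i)), snd Mc)"

definition id_tensor :: "('a \<Rightarrow> 'a \<Rightarrow> complex) \<times> bool \<Rightarrow> ('a list \<Rightarrow> 'a list \<Rightarrow> complex) \<times> bool" where
  "id_tensor Mc = ((\<lambda>xs ys. if butlast xs = butlast ys then fst Mc (last xs) (last ys) else 0), snd Mc)"

end

theory Submission
  imports Defs
begin

(*
  Let c = e^{i pi/4}/sqrt 2 and let S be the permutation matrix of g |-> g~.  The matrix
  u_2 = c 1 + cnj c S is unitary because c cnj c = 1/2 and c^2 + cnj c^2 = 0, and since S is a
  real involution, cnj u_2 = u_2 S: conjugating by u_2 absorbs the extra complex conjugation
  carried by the antiunitary D(t).  The shear U_1 : (x, l) |-> (l^-1 x, l) turns the diagonal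
  action (x, l) |-> (g x, g l) into (x, l) |-> (x, g l), and the involution acting on the first
  factor commutes with everything that acts on the last one.  Nothing here uses that the first
  factor is G_0 itself: any finite G_0-set X with an involution compatible with g |-> g~ works, and
  X = G_0^{N-1} with the diagonal action gives the N-fold statement directly, without iterating.
*)

definition involution_on :: "'i set \<Rightarrow> ('i \<Rightarrow> 'i) \<Rightarrow> bool" where
  "involution_on J s \<longleftrightarrow> (\<forall>x\<in>J. s x \<in> J \<and> s (s x) = x)"

definition conjugates :: "'i set \<Rightarrow> ('i \<Rightarrow> 'i \<Rightarrow> complex)
    \<Rightarrow> ('i \<Rightarrow> 'i \<Rightarrow> complex) \<times> bool \<Rightarrow> ('i \<Rightarrow> 'i \<Rightarrow> complex) \<times> bool \<Rightarrow> bool" where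
  "conjugates J U Mc Tc \<longleftrightarrow> (\<forall>v. \<forall>x\<in>J. lin J U (sapp J Mc (lin J (adj U) v)) x = sapp J Tc v x)"

lemma involution_onD:
  assumes "involution_on J s" "x \<in> J"
  shows "s x \<in> J" "s (s x) = x"
  using assms by (auto simp: involution_on_def)

lemma involution_on_inj:
  assumes "involution_on J s"
  shows "inj_on s J"
  by (rule inj_on_inverseI[where g = s]) (use assms in \<open>simp add: involution_on_def\<close>)

lemma involution_on_eq_iff:
  assumes "involution_on J s" "x \<in> J" "y \<in> J"
  shows "(x = s y) \<longleftrightarrow> (y = s x)"
  using assms by (auto simp: involution_on_def)

lemma idm_sym: "idm x y = idm y x"
  by (simp add: idm_def)

lemma cnj_idm [simp]: "cnj (idm x y) = idm x y"
  by (simp add: idm_def)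

lemma sum_idm_left:
  assumes "finite J" "a \<in> J"
  shows "(\<Sum>z\<in>J. idm z a * F z) = F a"
proof -
  have "(\<Sum>z\<in>J. idm z a * F z) = (\<Sum>z\<in>J. if z = a then F a else 0)"
    by (rule sum.cong) (simp_all add: idm_def)
  then show ?thesis using assms by simp
qed

lemma lin_lin:
  assumes "finite J"
  shows "lin J A (lin J B w) = lin J (mmult J A B) w"
proof
  fix x
  have "lin J A (lin J B w) x = (\<Sum>y\<in>J. \<Sum>z\<in>J. A x y * (B y z * w z))"
    by (simp add: lin_def sum_distrib_left)
  also have "\<dots> = (\<Sum>z\<in>J. \<Sum>y\<in>J. A x y * B y z * w z)"
    by (subst sum.swap) (simp add: mult.assoc)
  also have "\<dots> = lin J (mmult J A B) w x"
    by (simp add: lin_def mmult_def sum_distrib_right)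
  finally show "lin J A (lin J B w) x = lin J (mmult J A B) w x" .
qed

lemma lin_cong_row:
  assumes "\<forall>y\<in>J. A x y = B x y"
  shows "lin J A w x = lin J B w x"
  using assms by (simp add: lin_def)

lemma cvec_lin: "cvec (lin J A w) = lin J (\<lambda>x y. cnj (A x y)) (cvec w)"
  by (simp add: cvec_def lin_def fun_eq_iff)

lemma mmult_idm_right:
  assumes "finite J" "m y \<in> J" "\<forall>z\<in>J. M z y = idm z (m y)"
  shows "mmult J A M x y = A x (m y)"
  using assms sum_idm_left[OF assms(1,2), of "A x"] by (simp add: mmult_def mult.commute)

lemma lin_transfer:
  assumes "bij_betw f J K" "\<forall>y\<in>J. B x y = C (f x) (f y)" "\<forall>y\<in>J. v y = w (f y)"
  shows "lin J B v x = lin K C w (f x)"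
proof -
  have "lin J B v x = (\<Sum>y\<in>J. C (f x) (f y) * w (f y))"
    using assms(2,3) by (simp add: lin_def)
  also have "\<dots> = lin K C w (f x)"
    unfolding lin_def by (rule sum.reindex_bij_betw[OF assms(1)])
  finally show ?thesis .
qed

lemma sapp_transfer:
  assumes "bij_betw f J K" "\<forall>y\<in>J. fst Mc' x y = fst Mc (f x) (f y)" "snd Mc' = snd Mc"
    and "\<forall>y\<in>J. v y = w (f y)"
  shows "sapp J Mc' v x = sapp K Mc w (f x)"
proof -
  have "\<forall>y\<in>J. cvec v y = cvec w (f y)" using assms(4) by (simp add: cvec_def)
  then show ?thesis
    using lin_transfer[where B = "fst Mc'" and C = "fst Mc", OF assms(1,2)] assms(3,4)
    by (simp add: sapp_def)
qed

lemma unitary_on_transfer: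
  assumes f: "bij_betw f J K" and "unitary_on K A" and A': "\<forall>x\<in>J. \<forall>y\<in>J. A' x y = A (f x) (f y)"
  shows "unitary_on J A'"
  unfolding unitary_on_def
proof (intro ballI conjI)
  fix x y assume xy: "x \<in> J" "y \<in> J"
  have fxy: "f x \<in> K" "f y \<in> K" and idm: "idm (f x) (f y) = idm x y"
    using f xy by (auto simp: bij_betw_def idm_def inj_on_eq_iff)
  have "mmult J A' (adj A') x y = (\<Sum>z\<in>J. A (f x) (f z) * cnj (A (f y) (f z)))"
    unfolding mmult_def adj_def using xy A' by (intro sum.cong) auto
  also have "\<dots> = mmult K A (adj A) (f x) (f y)"
    unfolding mmult_def adj_def by (rule sum.reindex_bij_betw[OF f])
  finally show "mmult J A' (adj A') x y = idm x y"
    using assms(2) fxy idm by (simp add: unitary_on_def)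
  have "mmult J (adj A') A' x y = (\<Sum>z\<in>J. cnj (A (f z) (f x)) * A (f z) (f y))"
    unfolding mmult_def adj_def using xy A' by (intro sum.cong) auto
  also have "\<dots> = mmult K (adj A) A (f x) (f y)"
    unfolding mmult_def adj_def by (rule sum.reindex_bij_betw[OF f])
  finally show "mmult J (adj A') A' x y = idm x y"
    using assms(2) fxy idm by (simp add: unitary_on_def)
qed

lemma conjugates_transfer:
  assumes f: "bij_betw f J K" and conj: "conjugates K A Mc Tc"
    and A': "\<forall>x\<in>J. \<forall>y\<in>J. A' x y = A (f x) (f y)"
    and M': "\<forall>x\<in>J. \<forall>y\<in>J. fst Mc' x y = fst Mc (f x) (f y)" "snd Mc' = snd Mc"
    and T': "\<forall>x\<in>J. \<forall>y\<in>J. fst Tc' x y = fst Tc (f x) (f y)" "snd Tc' = snd Tc"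
  shows "conjugates J A' Mc' Tc'"
  unfolding conjugates_def
proof (intro allI ballI)
  fix v :: "_ \<Rightarrow> complex" and x assume x: "x \<in> J"
  define w where "w = v \<circ> the_inv_into J f"
  have vw: "\<forall>y\<in>J. v y = w (f y)"
    using f by (simp add: w_def bij_betw_def the_inv_into_f_f)
  have adj: "\<forall>y\<in>J. lin J (adj A') v y = lin K (adj A) w (f y)"
    using A' vw by (auto simp: adj_def intro!: lin_transfer[OF f])
  have M: "\<forall>y\<in>J. sapp J Mc' (lin J (adj A') v) y = sapp K Mc (lin K (adj A) w) (f y)"
    using M' adj by (auto intro!: sapp_transfer[OF f])
  have "lin J A' (sapp J Mc' (lin J (adj A') v)) x = lin K A (sapp K Mc (lin K (adj A) w)) (f x)"
    using A' M x by (intro lin_transfer[OF f]) auto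
  also have "\<dots> = sapp K Tc w (f x)"
    using conj f x by (auto simp: conjugates_def bij_betw_def)
  also have "\<dots> = sapp J Tc' v x"
    using T' vw x by (intro sapp_transfer[OF f, symmetric]) auto
  finally show "lin J A' (sapp J Mc' (lin J (adj A') v)) x = sapp J Tc' v x" .
qed

definition twist_coeff :: complex where
  "twist_coeff = cis (pi / 4) / complex_of_real (sqrt 2)"

lemma twist_coeff_mult_cnj: "twist_coeff * cnj twist_coeff = 1 / 2"
proof -
  have "complex_of_real (sqrt 2) * complex_of_real (sqrt 2) = 2"
    by (simp flip: of_real_mult)
  then show ?thesis
    by (simp add: twist_coeff_def cis_cnj cis_mult flip: cis_divide)
qed

lemma twist_coeff_sq_add_cnj_sq: "twist_coeff * twist_coeff + cnj twist_coeff * cnj twist_coeff = 0"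
proof -
  have "cis (pi / 4) * cis (pi / 4) + cis (- (pi / 4)) * cis (- (pi / 4)) = 0"
    by (simp add: cis_mult)
  then show ?thesis
    by (simp add: twist_coeff_def cis_cnj flip: add_divide_distrib)
qed

definition twist_mat :: "('i \<Rightarrow> 'i) \<Rightarrow> 'i \<Rightarrow> 'i \<Rightarrow> complex" where
  "twist_mat s x y = twist_coeff * idm x y + cnj twist_coeff * idm x (s y)"

lemma twist_mat_sym:
  assumes "involution_on J s" "x \<in> J" "y \<in> J"
  shows "twist_mat s x y = twist_mat s y x"
  using involution_on_eq_iff[OF assms] by (simp add: twist_mat_def idm_def)

lemma twist_mat_involution_right:
  assumes "involution_on J s" "y \<in> J"
  shows "twist_mat s x (s y) = cnj (twist_mat s x y)"
  using involution_onD[OF assms] by (simp add: twist_mat_def add.commute)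

lemma twist_mat_orthonormal:
  assumes "finite J" "involution_on J s" "x \<in> J" "y \<in> J"
  shows "(\<Sum>z\<in>J. twist_mat s x z * cnj (twist_mat s y z)) = idm x y"
proof -
  let ?c = twist_coeff and ?F = "\<lambda>z. cnj (twist_mat s y z)"
  have sx: "s x \<in> J" using involution_onD[OF assms(2,3)] by blast
  have "(\<Sum>z\<in>J. twist_mat s x z * ?F z) = (\<Sum>z\<in>J. (?c * idm z x + cnj ?c * idm z (s x)) * ?F z)"
  proof (rule sum.cong[OF refl])
    fix z assume "z \<in> J"
    show "twist_mat s x z * ?F z = (?c * idm z x + cnj ?c * idm z (s x)) * ?F z"
      unfolding twist_mat_sym[OF assms(2,3) \<open>z \<in> J\<close>] by (simp add: twist_mat_def)
  qed
  also have "\<dots> = ?c * (\<Sum>z\<in>J. idm z x * ?F z) + cnj ?c * (\<Sum>z\<in>J. idm z (s x) * ?F z)"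
    by (simp add: distrib_right sum.distrib sum_distrib_left mult.assoc)
  also have "\<dots> = ?c * cnj (twist_mat s y x) + cnj ?c * twist_mat s y x"
    using assms sx by (simp add: sum_idm_left twist_mat_involution_right)
  also have "\<dots> = (?c * cnj ?c + cnj ?c * ?c) * idm y x + (?c * ?c + cnj ?c * cnj ?c) * idm y (s x)"
    by (simp add: twist_mat_def algebra_simps)
  also have "\<dots> = idm x y"
    using twist_coeff_mult_cnj twist_coeff_sq_add_cnj_sq by (simp add: mult.commute idm_sym)
  finally show ?thesis .
qed

lemma twist_mat_equivariant:
  assumes "involution_on J s" "inj_on t J" "t ` J \<subseteq> J" "\<forall>y\<in>J. s (t y) = t (s y)"
    and "x \<in> J" "z \<in> J"
  shows "twist_mat s (t x) (t z) = twist_mat s x z"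
proof -
  have "s z \<in> J" using involution_onD[OF assms(1,6)] by blast
  then have "(t x = t (s z)) = (x = s z)" "(t x = t z) = (x = z)"
    using assms(2,5,6) by (simp_all add: inj_on_eq_iff)
  then show ?thesis using assms(4,6) by (simp add: twist_mat_def idm_def)
qed

lemma twist_mat_shifted_orthonormal:
  assumes "finite J" "involution_on J s" "inj_on t J" "t ` J \<subseteq> J" "\<forall>y\<in>J. s (t y) = t (s y)"
    and "x \<in> J" "y \<in> J"
  shows "(\<Sum>z\<in>J. twist_mat s x (t z) * cnj (twist_mat s y z)) = idm x (t y)"
proof -
  have "t ` J = J" using endo_inj_surj assms(1,3,4) by blast
  then obtain x' where x': "x' \<in> J" "x = t x'" using assms(6) by blast
  have "(\<Sum>z\<in>J. twist_mat s x (t z) * cnj (twist_mat s y z))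
      = (\<Sum>z\<in>J. twist_mat s x' z * cnj (twist_mat s y z))"
    using x' twist_mat_equivariant[OF assms(2-5) x'(1)] by (intro sum.cong) auto
  also have "\<dots> = idm x' y" using twist_mat_orthonormal[OF assms(1,2) x'(1) assms(7)] .
  also have "\<dots> = idm x (t y)" using x' assms(3,7) by (simp add: idm_def inj_on_eq_iff)
  finally show ?thesis .
qed

lemma unitary_on_twist_mat_perm:
  assumes "finite J" "involution_on J s" "bij_betw p J J"
  shows "unitary_on J (\<lambda>x y. twist_mat s x (p y))"
  unfolding unitary_on_def
proof (intro ballI conjI)
  fix x y assume xy: "x \<in> J" "y \<in> J"
  have pJ: "p x \<in> J" "p y \<in> J" and idm: "idm (p y) (p x) = idm x y"
    using assms(3) xy by (auto simp: bij_betw_def idm_def inj_on_eq_iff)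
  have "mmult J (\<lambda>x y. twist_mat s x (p y)) (adj (\<lambda>x y. twist_mat s x (p y))) x y
      = (\<Sum>z\<in>J. twist_mat s x (p z) * cnj (twist_mat s y (p z)))"
    by (simp add: mmult_def adj_def)
  also have "\<dots> = (\<Sum>z\<in>J. twist_mat s x z * cnj (twist_mat s y z))"
    by (rule sum.reindex_bij_betw[OF assms(3)])
  also have "\<dots> = idm x y" using twist_mat_orthonormal[OF assms(1,2) xy] .
  finally show "mmult J (\<lambda>x y. twist_mat s x (p y)) (adj (\<lambda>x y. twist_mat s x (p y))) x y = idm x y" .
  have "mmult J (adj (\<lambda>x y. twist_mat s x (p y))) (\<lambda>x y. twist_mat s x (p y)) x y
      = (\<Sum>z\<in>J. twist_mat s (p y) z * cnj (twist_mat s (p x) z))"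
    unfolding mmult_def adj_def
    using twist_mat_sym[OF assms(2) _ pJ(1)] twist_mat_sym[OF assms(2) _ pJ(2)]
    by (intro sum.cong) (simp_all add: mult.commute)
  also have "\<dots> = idm x y" using twist_mat_orthonormal[OF assms(1,2) pJ(2,1)] idm by simp
  finally show "mmult J (adj (\<lambda>x y. twist_mat s x (p y))) (\<lambda>x y. twist_mat s x (p y)) x y = idm x y" .
qed

text \<open>With u = u_2 P, where P is the permutation matrix of p, the operator P M P^* permutes
  by t, or by s \<circ> t if M is antilinear; in the latter case the extra s is absorbed by
  cnj u_2 = u_2 S.\<close>

lemma conjugates_twist_mat_perm:
  assumes fin: "finite J" and s: "involution_on J s" and p: "bij_betw p J J"
    and t: "inj_on t J" "t ` J \<subseteq> J" "\<forall>y\<in>J. s (t y) = t (s y)" and m: "m ` J \<subseteq> J"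
    and M: "\<forall>x\<in>J. \<forall>y\<in>J. fst Mc x y = idm x (m y)" and T: "\<forall>x\<in>J. \<forall>y\<in>J. fst Tc x y = idm x (t y)"
    and b: "snd Mc = b" "snd Tc = b"
    and rel: "\<forall>y\<in>J. p (m y) = (if b then s (t (p y)) else t (p y))"
  shows "conjugates J (\<lambda>x y. twist_mat s x (p y)) Mc Tc"
  unfolding conjugates_def
proof (intro allI ballI)
  fix v x assume x: "x \<in> J"
  define u where "u = (\<lambda>x y. twist_mat s x (p y))"
  have pJ: "p z \<in> J" if "z \<in> J" for z using p that by (auto simp: bij_betw_def)
  have shifted: "(\<Sum>z\<in>J. twist_mat s x (t (p z)) * cnj (u y z)) = idm x (t y)" if "y \<in> J" for y
  proof -
    have "(\<Sum>z\<in>J. twist_mat s x (t (p z)) * cnj (u y z))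
        = (\<Sum>z\<in>J. twist_mat s x (t z) * cnj (twist_mat s y z))"
      unfolding u_def by (rule sum.reindex_bij_betw[OF p])
    then show ?thesis using twist_mat_shifted_orthonormal[OF fin s t x that] by simp
  qed
  have uM: "mmult J u (fst Mc) x z = (if b then cnj (twist_mat s x (t (p z))) else twist_mat s x (t (p z)))"
    if "z \<in> J" for z
  proof -
    have "mmult J u (fst Mc) x z = u x (m z)"
      using m M that by (intro mmult_idm_right[OF fin]) auto
    moreover have "t (p z) \<in> J" using t(2) pJ[OF that] by blast
    ultimately show ?thesis
      using rel that twist_mat_involution_right[OF s] by (auto simp: u_def)
  qed
  show "lin J u (sapp J Mc (lin J (adj u) v)) x = sapp J Tc v x"
  proof (cases b)
    case False
    have "lin J u (sapp J Mc (lin J (adj u) v)) x = lin J (mmult J (mmult J u (fst Mc)) (adj u)) v x"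
      using b False by (simp add: sapp_def lin_lin[OF fin, symmetric])
    also have "\<dots> = lin J (fst Tc) v x"
      using False uM shifted T x by (intro lin_cong_row) (simp add: mmult_def adj_def)
    finally show ?thesis using b False by (simp add: sapp_def)
  next
    case True
    have "lin J u (sapp J Mc (lin J (adj u) v)) x
        = lin J (mmult J (mmult J u (fst Mc)) (\<lambda>z y. u y z)) (cvec v) x"
      using b True by (simp add: sapp_def cvec_lin adj_def lin_lin[OF fin, symmetric])
    also have "\<dots> = lin J (fst Tc) (cvec v) x"
    proof (rule lin_cong_row, rule ballI)
      fix y assume y: "y \<in> J"
      have "mmult J (mmult J u (fst Mc)) (\<lambda>z y. u y z) x y
          = cnj (\<Sum>z\<in>J. twist_mat s x (t (p z)) * cnj (u y z))"
        using True uM by (simp add: mmult_def)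
      then show "mmult J (mmult J u (fst Mc)) (\<lambda>z y. u y z) x y = fst Tc x y"
        using shifted[OF y] T x y by simp
    qed
    finally show ?thesis using b True by (simp add: sapp_def)
  qed
qed

text \<open>The paper's setting is X = carrier G acting on itself; X = G^(N-1) with the diagonal
  action yields the tensor powers.\<close>

locale involutive_action = group G for G (structure) +
  fixes phi :: "'a \<Rightarrow> 'a" and X :: "'x set" and act :: "'a \<Rightarrow> 'x \<Rightarrow> 'x" and \<sigma> :: "'x \<Rightarrow> 'x"
  assumes finite_carrier: "finite (carrier G)" and finite_X: "finite X"
    and phi_hom: "phi \<in> hom G G" and phi_involution: "involution_on (carrier G) phi"
    and act_closed: "\<lbrakk>g \<in> carrier G; x \<in> X\<rbrakk> \<Longrightarrow> act g x \<in> X"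
    and act_one: "x \<in> X \<Longrightarrow> act \<one> x = x"
    and act_mult: "\<lbrakk>g \<in> carrier G; h \<in> carrier G; x \<in> X\<rbrakk> \<Longrightarrow> act g (act h x) = act (g \<otimes> h) x"
    and \<sigma>_involution: "involution_on X \<sigma>"
    and \<sigma>_act: "\<lbrakk>g \<in> carrier G; x \<in> X\<rbrakk> \<Longrightarrow> \<sigma> (act g x) = act (phi g) (\<sigma> x)"

sublocale involutive_action \<subseteq> group_hom G G phi
  using phi_hom by unfold_locales

context involutive_action
begin

definition shear :: "'x \<times> 'a \<Rightarrow> 'x \<times> 'a" where
  "shear y = (act (inv (snd y)) (fst y), snd y)"

text \<open>The unitary (u_2 \<otimes> 1) U_1 of the paper, U_1 being the permutation matrix of the shear.\<close>

definition decoupling_unitary :: "'x \<times> 'a \<Rightarrow> 'x \<times> 'a \<Rightarrow> complex" where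
  "decoupling_unitary x y = twist_mat (apfst \<sigma>) x (shear y)"

lemma bij_betw_shear: "bij_betw shear (X \<times> carrier G) (X \<times> carrier G)"
  by (rule bij_betw_byWitness[where f' = "\<lambda>y. (act (snd y) (fst y), snd y)"])
     (auto simp: shear_def act_closed act_mult act_one)

lemma involution_on_apfst: "involution_on (X \<times> carrier G) (apfst \<sigma>)"
  using \<sigma>_involution by (auto simp: involution_on_def)

lemma unitary_on_decoupling_unitary: "unitary_on (X \<times> carrier G) decoupling_unitary"
  unfolding decoupling_unitary_def
  by (rule unitary_on_twist_mat_perm[OF _ involution_on_apfst bij_betw_shear])
     (simp add: finite_X finite_carrier)

lemma phi_closed: "l \<in> carrier G \<Longrightarrow> phi l \<in> carrier G"
  using involution_onD(1)[OF phi_involution] .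

lemma inj_on_twisted_left_mult:
  assumes "g \<in> carrier G"
  shows "inj_on (\<lambda>l. g \<otimes> (if b then phi l else l)) (carrier G)"
proof (rule inj_onI)
  fix x y assume xy: "x \<in> carrier G" "y \<in> carrier G"
    and "g \<otimes> (if b then phi x else x) = g \<otimes> (if b then phi y else y)"
  then have "(if b then phi x else x) = (if b then phi y else y)"
    using assms phi_closed by (cases b) simp_all
  then show "x = y"
    using involution_on_inj[OF phi_involution] xy by (cases b) (simp_all add: inj_on_eq_iff)
qed

lemma shear_diagonal_action:
  assumes "g \<in> carrier G" "x \<in> X" "l \<in> carrier G"
  shows "shear (act g (if b then \<sigma> x else x), g \<otimes> (if b then phi l else l))
    = ((if b then \<sigma> else id) (act (inv l) x), g \<otimes> (if b then phi l else l))"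
proof -
  have "inv (g \<otimes> (if b then phi l else l)) \<otimes> g = (if b then phi (inv l) else inv l)"
    using assms phi_closed by (simp add: inv_mult_group m_assoc hom_inv)
  then show ?thesis
    using assms phi_closed involution_onD(1)[OF \<sigma>_involution]
    by (simp add: shear_def act_mult \<sigma>_act)
qed

lemma conjugates_decoupling_unitary:
  assumes g: "g \<in> carrier G" and b: "snd Mc = b" "snd Tc = b"
    and M: "\<forall>x\<in>X \<times> carrier G. \<forall>y\<in>X \<times> carrier G.
      fst Mc x y = idm x (act g (if b then \<sigma> (fst y) else fst y), g \<otimes> (if b then phi (snd y) else snd y))"
    and T: "\<forall>x\<in>X \<times> carrier G. \<forall>y\<in>X \<times> carrier G.
      fst Tc x y = idm x (fst y, g \<otimes> (if b then phi (snd y) else snd y))"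
  shows "conjugates (X \<times> carrier G) decoupling_unitary Mc Tc"
proof -
  define f where "f = (\<lambda>l. g \<otimes> (if b then phi l else l))"
  define m :: "'x \<times> 'a \<Rightarrow> 'x \<times> 'a" where "m y = (act g (if b then \<sigma> (fst y) else fst y), f (snd y))" for y
  define t :: "'x \<times> 'a \<Rightarrow> 'x \<times> 'a" where "t y = (fst y, f (snd y))" for y
  have fC: "f l \<in> carrier G" if "l \<in> carrier G" for l
    using g phi_closed that by (simp add: f_def)
  have "inj_on f (carrier G)"
    unfolding f_def by (rule inj_on_twisted_left_mult[OF g])
  then have t: "inj_on t (X \<times> carrier G)" "t ` (X \<times> carrier G) \<subseteq> X \<times> carrier G"
    using fC by (auto simp: inj_on_def t_def)
  have m: "m ` (X \<times> carrier G) \<subseteq> X \<times> carrier G"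
    using g fC act_closed involution_onD[OF \<sigma>_involution] by (auto simp: m_def)
  have rel: "\<forall>y\<in>X \<times> carrier G. shear (m y) = (if b then apfst \<sigma> (t (shear y)) else t (shear y))"
  proof
    fix y assume "y \<in> X \<times> carrier G"
    then obtain x l where xl: "y = (x, l)" "x \<in> X" "l \<in> carrier G" by auto
    have "shear (x, l) = (act (inv l) x, l)" by (simp add: shear_def)
    then show "shear (m y) = (if b then apfst \<sigma> (t (shear y)) else t (shear y))"
      using shear_diagonal_action[OF g xl(2,3), of b] xl(1)
      by (cases b) (simp_all add: m_def t_def f_def)
  qed
  have comm: "\<forall>y\<in>X \<times> carrier G. apfst \<sigma> (t y) = t (apfst \<sigma> y)"
    by (simp add: t_def)
  have M': "\<forall>x\<in>X \<times> carrier G. \<forall>y\<in>X \<times> carrier G. fst Mc x y = idm x (m y)"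
    using M by (simp add: m_def f_def)
  have T': "\<forall>x\<in>X \<times> carrier G. \<forall>y\<in>X \<times> carrier G. fst Tc x y = idm x (t y)"
    using T by (simp add: t_def f_def)
  have fin: "finite (X \<times> carrier G)" using finite_X finite_carrier by simp
  show ?thesis
    unfolding decoupling_unitary_def
    using conjugates_twist_mat_perm[OF fin involution_on_apfst bij_betw_shear t comm m M' T' b rel] .
qed

end

lemma (in group) U1mat_eq_idm:
  assumes "finite (carrier G)" "y \<in> carrier G \<times> carrier G"
  shows "U1mat G z y = idm z (inv (snd y) \<otimes> fst y, snd y)"
proof -
  obtain y1 y2 where y: "y = (y1, y2)" "y1 \<in> carrier G" "y2 \<in> carrier G" using assms(2) by auto
  have "U1mat G z y = (\<Sum>g\<in>carrier G. if g = inv y2 then idm z (inv y2 \<otimes> y1, y2) else 0)"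
    unfolding U1mat_def
  proof (rule sum.cong[OF refl])
    fix g assume g: "g \<in> carrier G"
    have "(y2 = inv g) = (g = inv y2)" using g y by (metis inv_inv)
    then show "kron (fst (Drep G (\<lambda>z. z) (g, False))) (\<lambda>a c. if a = inv g \<and> c = inv g then 1 else 0) z y
        = (if g = inv y2 then idm z (inv y2 \<otimes> y1, y2) else 0)"
      using y by (cases z) (auto simp: kron_def Drep_def idm_def)
  qed
  also have "\<dots> = idm z (inv y2 \<otimes> y1, y2)" using assms(1) y by simp
  finally show ?thesis using y by simp
qed

lemma u2mat_eq_twist:
  assumes "finite (carrier G)" "y \<in> carrier G"
  shows "u2mat G phi x y = twist_coeff * idm x y + cnj twist_coeff * idm x (phi y)"
proof -
  have "u2mat G phi x y = (\<Sum>g\<in>carrier G. if g = y then twist_coeff * idm x y + cnj twist_coeff * idm x (phi y) else 0)"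
    unfolding u2mat_def
    by (intro sum.cong) (auto simp: twist_coeff_def idm_def cis_cnj add_divide_distrib)
  then show ?thesis using assms by simp
qed

lemma umat_eq_twist_mat:
  fixes G (structure)
  assumes "group G" "finite (carrier G)" "x \<in> carrier G \<times> carrier G" "y \<in> carrier G \<times> carrier G"
  shows "umat G phi x y = twist_mat (apfst phi) x (inv (snd y) \<otimes> fst y, snd y)"
proof -
  interpret group G by fact
  let ?y' = "(inv (snd y) \<otimes> fst y, snd y)"
  have y': "?y' \<in> carrier G \<times> carrier G" using assms(4) by auto
  have "umat G phi x y = (\<Sum>z\<in>carrier G \<times> carrier G. idm z ?y' * kron (u2mat G phi) idm x z)"
    unfolding umat_def mmult_def using U1mat_eq_idm[OF assms(2,4)] by (simp add: mult.commute)
  also have "\<dots> = kron (u2mat G phi) idm x ?y'"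
    using assms(2) y' by (simp add: sum_idm_left)
  also have "\<dots> = twist_mat (apfst phi) x ?y'"
    using y' u2mat_eq_twist[OF assms(2)] by (cases x) (simp add: kron_def twist_mat_def idm_def)
  finally show ?thesis .
qed

lemma tensor_square_decoupled:
  fixes G (structure)
  assumes "group G" "finite (carrier G)" "phi \<in> hom G G" "involution_on (carrier G) phi"
  shows "unitary_on (carrier G \<times> carrier G) (umat G phi)
    \<and> (\<forall>g\<in>carrier G. \<forall>b. conjugates (carrier G \<times> carrier G) (umat G phi)
          (stensor (Drep G phi (g, b)) (Drep G phi (g, b))) (stensor (idm, b) (Drep G phi (g, b))))"
proof -
  interpret group G by fact
  interpret A: involutive_action G phi "carrier G" "(\<otimes>)" phi
    using assms by unfold_locales (auto simp: m_assoc hom_mult)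
  have u: "\<forall>x\<in>carrier G \<times> carrier G. \<forall>y\<in>carrier G \<times> carrier G. umat G phi x y = A.decoupling_unitary (id x) (id y)"
    using umat_eq_twist_mat[OF assms(1,2)] by (simp add: A.decoupling_unitary_def A.shear_def)
  have "conjugates (carrier G \<times> carrier G) (umat G phi)
          (stensor (Drep G phi (g, b)) (Drep G phi (g, b))) (stensor (idm, b) (Drep G phi (g, b)))"
    if "g \<in> carrier G" for g b
  proof -
    let ?f = "\<lambda>l. g \<otimes> (if b then phi l else l)"
    have "conjugates (carrier G \<times> carrier G) A.decoupling_unitary
        (\<lambda>x y. idm x (?f (fst y), ?f (snd y)), b) (\<lambda>x y. idm x (fst y, ?f (snd y)), b)"
      by (rule A.conjugates_decoupling_unitary[OF that]) auto
    then show ?thesis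
      by (rule conjugates_transfer[OF bij_betw_id _ u])
         (auto simp: stensor_def kron_def Drep_def idm_def)
  qed
  then show ?thesis
    using unitary_on_transfer[OF bij_betw_id A.unitary_on_decoupling_unitary u] by simp
qed

lemma prod_indicator: "(\<Prod>i<(n::nat). if P i then 1 else 0) = (if \<forall>i<n. P i then 1 else (0::complex))"
  by (induction n) (auto simp: lessThan_Suc less_Suc_eq)

lemma bij_betw_butlast_last:
  "bij_betw (\<lambda>xs. (butlast xs, last xs)) (tidx G (Suc n)) (tidx G n \<times> carrier G)"
proof (rule bij_betw_byWitness[where f' = "\<lambda>y. fst y @ [snd y]"])
  have "xs \<noteq> []" if "xs \<in> tidx G (Suc n)" for xs
    using that by (auto simp: tidx_def)
  then show "\<forall>xs\<in>tidx G (Suc n). fst (butlast xs, last xs) @ [snd (butlast xs, last xs)] = xs"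
    and "(\<lambda>xs. (butlast xs, last xs)) ` tidx G (Suc n) \<subseteq> tidx G n \<times> carrier G"
    by (auto simp: tidx_def in_set_butlastD dest!: last_in_set)
qed (auto simp: tidx_def)

lemma butlast_last_eq_iff:
  assumes "xs \<noteq> []" "ys \<noteq> []"
  shows "(butlast xs, last xs) = (butlast ys, last ys) \<longleftrightarrow> xs = ys"
  using assms by (metis append_butlast_last_id prod.inject)

lemma tpow_Drep_eq_idm:
  assumes "xs \<in> tidx G (Suc n)" "ys \<in> tidx G (Suc n)"
  shows "fst (tpow (Drep G phi (g, b))) xs ys
    = idm (butlast xs, last xs)
        (map ((\<otimes>\<^bsub>G\<^esub>) g) (if b then map phi (butlast ys) else butlast ys),
         g \<otimes>\<^bsub>G\<^esub> (if b then phi (last ys) else last ys))"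
proof -
  define f where "f = (\<lambda>y. g \<otimes>\<^bsub>G\<^esub> (if b then phi y else y))"
  have ne: "xs \<noteq> []" "ys \<noteq> []" and len: "length xs = length ys"
    using assms by (auto simp: tidx_def)
  have "fst (tpow (Drep G phi (g, b))) xs ys = idm xs (map f ys)"
    using len by (simp add: tpow_def Drep_def prod_indicator f_def idm_def list_eq_iff_nth_eq)
  also have "\<dots> = idm (butlast xs, last xs) (butlast (map f ys), last (map f ys))"
    using butlast_last_eq_iff[OF ne(1), of "map f ys"] ne(2) by (simp add: idm_def)
  finally show ?thesis
    using ne(2) by (cases b) (simp_all add: f_def last_map comp_def flip: map_butlast)
qed

lemma tensor_power_decoupled:
  fixes G (structure)
  assumes "group G" "finite (carrier G)" "phi \<in> hom G G" "involution_on (carrier G) phi"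
  shows "\<exists>U. unitary_on (tidx G (Suc n)) U \<and> (\<forall>g\<in>carrier G. \<forall>b.
    conjugates (tidx G (Suc n)) U (tpow (Drep G phi (g, b))) (id_tensor (Drep G phi (g, b))))"
proof -
  interpret group G by fact
  interpret A: involutive_action G phi "tidx G n" "\<lambda>g. map ((\<otimes>) g)" "map phi"
  proof unfold_locales
    show "finite (tidx G n)"
      using finite_lists_length_eq[OF assms(2)] by (simp add: tidx_def conj_commute)
    show "involution_on (tidx G n) (map phi)"
      using assms(4) by (fastforce simp: involution_on_def tidx_def intro!: map_idI)
    show "map ((\<otimes>) g) xs \<in> tidx G n" if "g \<in> carrier G" "xs \<in> tidx G n" for g xs
      using that by (auto simp: tidx_def)
    show "map ((\<otimes>) \<one>) xs = xs" if "xs \<in> tidx G n" for xs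
      using that by (auto simp: tidx_def intro!: map_idI)
    show "map ((\<otimes>) g) (map ((\<otimes>) h) xs) = map ((\<otimes>) (g \<otimes> h)) xs"
      if "g \<in> carrier G" "h \<in> carrier G" "xs \<in> tidx G n" for g h xs
      using that by (auto simp: tidx_def m_assoc)
    show "map phi (map ((\<otimes>) g) xs) = map ((\<otimes>) (phi g)) (map phi xs)"
      if "g \<in> carrier G" "xs \<in> tidx G n" for g xs
      using that assms(3) by (auto simp: tidx_def hom_mult)
  qed (use assms in auto)
  define split where "split xs = (butlast xs, last xs)" for xs :: "'a list"
  have split: "bij_betw split (tidx G (Suc n)) (tidx G n \<times> carrier G)"
    unfolding split_def by (rule bij_betw_butlast_last)
  define U where "U xs ys = A.decoupling_unitary (split xs) (split ys)" for xs ys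
  have "conjugates (tidx G (Suc n)) U (tpow (Drep G phi (g, b))) (id_tensor (Drep G phi (g, b)))"
    if "g \<in> carrier G" for g b
  proof -
    define f where "f l = g \<otimes> (if b then phi l else l)" for l
    define M where "M x y = idm x (map ((\<otimes>) g) (if b then map phi (fst y) else fst y), f (snd y))"
      for x y :: "'a list \<times> 'a"
    define T where "T x y = idm x (fst y, f (snd y))" for x y :: "'a list \<times> 'a"
    have "conjugates (tidx G n \<times> carrier G) A.decoupling_unitary (M, b) (T, b)"
      by (rule A.conjugates_decoupling_unitary[OF that, where b = b]) (simp_all add: M_def T_def f_def)
    then show ?thesis
    proof (rule conjugates_transfer[OF split])
      show "\<forall>xs\<in>tidx G (Suc n). \<forall>ys\<in>tidx G (Suc n). fst (tpow (Drep G phi (g, b))) xs ys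
          = fst (M, b) (split xs) (split ys)"
        by (simp add: M_def f_def split_def tpow_Drep_eq_idm)
      show "\<forall>xs\<in>tidx G (Suc n). \<forall>ys\<in>tidx G (Suc n). fst (id_tensor (Drep G phi (g, b))) xs ys
          = fst (T, b) (split xs) (split ys)"
        by (simp add: T_def f_def split_def id_tensor_def Drep_def idm_def)
    qed (simp_all add: U_def tpow_def id_tensor_def Drep_def)
  qed
  moreover have "unitary_on (tidx G (Suc n)) U"
    by (rule unitary_on_transfer[OF split A.unitary_on_decoupling_unitary]) (simp add: U_def)
  ultimately show ?thesis by blast
qed

theorem mainTheorem7:
  fixes G :: "('a, 'b) monoid_scheme" and phi :: "'a \<Rightarrow> 'a"
  assumes "group G" and "finite (carrier G)"
    and "phi \<in> iso G G" and "\<forall>x\<in>carrier G. phi (phi x) = x"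
  shows "unitary_on (carrier G \<times> carrier G) (umat G phi)
    \<and> (\<forall>g\<in>carrier G. \<forall>b. \<forall>v. \<forall>x\<in>carrier G \<times> carrier G.
          lin (carrier G \<times> carrier G) (umat G phi)
            (sapp (carrier G \<times> carrier G) (stensor (Drep G phi (g, b)) (Drep G phi (g, b)))
              (lin (carrier G \<times> carrier G) (adj (umat G phi)) v)) x
        = sapp (carrier G \<times> carrier G) (stensor (idm, b) (Drep G phi (g, b))) v x)
    \<and> (\<forall>N\<ge>1. \<exists>U. unitary_on (tidx G N) U \<and>
          (\<forall>g\<in>carrier G. \<forall>b. \<forall>v. \<forall>x\<in>tidx G N.
             lin (tidx G N) U (sapp (tidx G N) (tpow (Drep G phi (g, b)))
               (lin (tidx G N) (adj U) v)) x
           = sapp (tidx G N) (id_tensor (Drep G phi (g, b))) v x))"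
proof -
  have hom: "phi \<in> hom G G" using assms(3) by (simp add: iso_def)
  then have inv: "involution_on (carrier G) phi"
    using assms(4) by (auto simp: involution_on_def hom_def)
  have "\<exists>U. unitary_on (tidx G N) U \<and> (\<forall>g\<in>carrier G. \<forall>b.
          conjugates (tidx G N) U (tpow (Drep G phi (g, b))) (id_tensor (Drep G phi (g, b))))"
    if N: "N \<ge> 1" for N
  proof -
    obtain n where "N = Suc n" using N by (cases N) auto
    then show ?thesis using tensor_power_decoupled[OF assms(1,2) hom inv, of n] by simp
  qed
  then show ?thesis
    unfolding conjugates_def[symmetric]
    using tensor_square_decoupled[OF assms(1,2) hom inv] by blast
qed

end
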